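(* Let $\mathcal R$ be a CCTRS, let $\rho\colon \ell\to r\Leftarrow c$ be a rule of $\mathcal R$, and let $s$ be an instance of $\ell$. Suppose $s\to_{\mathcal R}^* t$ using only steps at non-root positions, and suppose $t\to_{\mathcal R} u$ by a step with rule $\rho$ at the root position. Then there exists a term $v$ such that $s\to_{\mathcal R} v$ by a step with rule $\rho$ at the root position and $v\to_{\mathcal R}^* u$.
   Context: Terms are built from a signature $\mathcal F$ and variables $\mathcal V$. An (oriented) conditional rewrite rule has the form $\ell\to r\Leftarrow a_1\approx b_1,\dots,a_k\approx b_k$ with $k\ge 0$. For a set $\mathcal R$ of such rules, $\to_{\mathcal R}=\bigcup_{i}\to_{\mathcal R_i}$ where $\mathcal R_0=\emptyset$ and $\mathcal R_{i+1}=\{\ell\sigma\to r\sigma\mid (\ell\to r\Leftarrow c)\in\mathcal R,\ a_j\sigma\to^*_{\mathcal R_i}b_j\sigma \text{ for all } j\}$; equivalently $s\to t$ iff there are a position $p$, a rule and a substitution $\sigma$ with $s|_p=\ell\sigma$, $t=s[r\sigma]_p$ and $a_j\sigma\to^*b_j\sigma$ for all $j$ (written $\mathcal R\vdash c\sigma$). Defined symbols are the root symbols of left-hand sides; all other symbols are constructors; constructor terms contain only constructors and variables. A CCTRS is such a system in which every rule has the form $f(\ell_1,\dots,\ell_n)\to r\Leftarrow a_1\approx b_1,\dots,a_k\approx b_k$ where $\ell_1,\dots,\ell_n,b_1,\dots,b_k$ are constructor terms, the terms $f(\ell_1,\dots,\ell_n),b_1,\dots,b_k$ pairwise have no common variables,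 $\mathrm{Var}(r)\subseteq\mathrm{Var}(\ell_1,\dots,\ell_n,b_1,\dots,b_k)$, and $\mathrm{Var}(a_i)\subseteq\mathrm{Var}(\ell_1,\dots,\ell_n,b_1,\dots,b_{i-1})$ for all $1\le i\le k$. *)

theory Defs
  imports Main
begin

datatype ('f, 'v) "term" = Var 'v | Fun 'f "('f, 'v) term list"

fun subst :: "('f, 'v) term \<Rightarrow> ('v \<Rightarrow> ('f, 'v) term) \<Rightarrow> ('f, 'v) term" (infixl "\<cdot>" 67) where
  "Var x \<cdot> \<sigma> = \<sigma> x"
| "Fun f ts \<cdot> \<sigma> = Fun f (map (\<lambda>t. t \<cdot> \<sigma>) ts)"

fun vars_term :: "('f, 'v) term \<Rightarrow> 'v set" where
  "vars_term (Var x) = {x}"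
| "vars_term (Fun f ts) = (\<Union>t\<in>set ts. vars_term t)"

fun funas_term :: "('f, 'v) term \<Rightarrow> ('f \<times> nat) set" where
  "funas_term (Var x) = {}"
| "funas_term (Fun f ts) = insert (f, length ts) (\<Union>t\<in>set ts. funas_term t)"

text \<open>A rule  l -> r <= a1 ~ b1, ..., ak ~ bk  is a triple (l, r, [(a1,b1),...,(ak,bk)]).\<close>
type_synonym ('f, 'v) crule = "('f, 'v) term \<times> ('f, 'v) term \<times> (('f, 'v) term \<times> ('f, 'v) term) list"

definition lhs :: "('f, 'v) crule \<Rightarrow> ('f, 'v) term" where "lhs \<rho> = fst \<rho>"
definition rhs :: "('f, 'v) crule \<Rightarrow> ('f, 'v) term" where "rhs \<rho> = fst (snd \<rho>)"
definition conds :: "('f, 'v) crule \<Rightarrow> (('f, 'v) term \<times> ('f, 'v) term) list" where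
  "conds \<rho> = snd (snd \<rho>)"

text \<open>The rewrite relation of an oriented CTRS: the least relation closed under
  root steps whose instantiated conditions are joinable by reachability, and under contexts.
  (This least fixed point coincides with the union of the levels R_i.)\<close>
inductive rstep :: "('f, 'v) crule set \<Rightarrow> ('f, 'v) term \<Rightarrow> ('f, 'v) term \<Rightarrow> bool"
  for R :: "('f, 'v) crule set" where
  root: "\<rho> \<in> R \<Longrightarrow> (\<forall>(a, b) \<in> set (conds \<rho>). (rstep R)\<^sup>*\<^sup>* (a \<cdot> \<sigma>) (b \<cdot> \<sigma>))
     \<Longrightarrow> rstep R (lhs \<rho> \<cdot> \<sigma>) (rhs \<rho> \<cdot> \<sigma>)"
| ctxt: "rstep R s t \<Longrightarrow> rstep R (Fun f (ss1 @ s # ss2)) (Fun f (ss1 @ t # ss2))"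

definition root_step :: "('f, 'v) crule set \<Rightarrow> ('f, 'v) crule \<Rightarrow> ('f, 'v) term \<Rightarrow> ('f, 'v) term \<Rightarrow> bool" where
  "root_step R \<rho> s t \<longleftrightarrow> \<rho> \<in> R \<and> (\<exists>\<sigma>. s = lhs \<rho> \<cdot> \<sigma> \<and> t = rhs \<rho> \<cdot> \<sigma> \<and>
      (\<forall>(a, b) \<in> set (conds \<rho>). (rstep R)\<^sup>*\<^sup>* (a \<cdot> \<sigma>) (b \<cdot> \<sigma>)))"

definition nonroot_step :: "('f, 'v) crule set \<Rightarrow> ('f, 'v) term \<Rightarrow> ('f, 'v) term \<Rightarrow> bool" where
  "nonroot_step R s t \<longleftrightarrow> (\<exists>f ss1 ss2 s' t'. rstep R s' t' \<and>
      s = Fun f (ss1 @ s' # ss2) \<and> t = Fun f (ss1 @ t' # ss2))"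

definition defined_syms :: "('f, 'v) crule set \<Rightarrow> ('f \<times> nat) set" where
  "defined_syms R = {(f, length ts) | f ts \<rho>. \<rho> \<in> R \<and> lhs \<rho> = Fun f ts}"

definition constructor_term :: "('f, 'v) crule set \<Rightarrow> ('f, 'v) term \<Rightarrow> bool" where
  "constructor_term R t \<longleftrightarrow> funas_term t \<inter> defined_syms R = {}"

definition cctrs_rule :: "('f, 'v) crule set \<Rightarrow> ('f, 'v) crule \<Rightarrow> bool" where
  "cctrs_rule R \<rho> \<longleftrightarrow> (let l = lhs \<rho>; r = rhs \<rho>; cs = conds \<rho>; k = length cs in
     (\<exists>f ls. l = Fun f ls \<and>
        (\<forall>li \<in> set ls. constructor_term R li) \<and>
        (\<forall>i < k. constructor_term R (snd (cs ! i))) \<and>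
        (\<forall>i < k. vars_term l \<inter> vars_term (snd (cs ! i)) = {}) \<and>
        (\<forall>i < k. \<forall>j < k. i \<noteq> j \<longrightarrow> vars_term (snd (cs ! i)) \<inter> vars_term (snd (cs ! j)) = {}) \<and>
        vars_term r \<subseteq> vars_term l \<union> (\<Union>i<k. vars_term (snd (cs ! i))) \<and>
        (\<forall>i < k. vars_term (fst (cs ! i)) \<subseteq> vars_term l \<union> (\<Union>j<i. vars_term (snd (cs ! j))))))"

definition cctrs :: "('f, 'v) crule set \<Rightarrow> bool" where
  "cctrs R \<longleftrightarrow> (\<forall>\<rho> \<in> R. cctrs_rule R \<rho>)"

end

theory Submission
  imports Defs
begin

text \<open>Left-hand sides of rules are rooted by defined symbols and their arguments are
  constructor terms, so no step can take place at a position of the pattern of the left-hand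
  side: starting from an instance of the left-hand side, every non-root reduction only rewrites
  inside the substituted subterms. Hence the final term is an instance of the left-hand side by a
  substitution that is a reduct of the original one, the conditions carry over because their
  right-hand sides share no variables with the left-hand side, and the root step can be performed
  first.\<close>

lemma subst_eq_conv: "t \<cdot> \<sigma> = t \<cdot> \<tau> \<longleftrightarrow> (\<forall>x \<in> vars_term t. \<sigma> x = \<tau> x)"
  by (induction t) (auto simp: map_eq_conv)

lemma rsteps_ctxt:
  "(rstep R)\<^sup>*\<^sup>* s t \<Longrightarrow> (rstep R)\<^sup>*\<^sup>* (Fun f (ss1 @ s # ss2)) (Fun f (ss1 @ t # ss2))"
  by (induction rule: rtranclp_induct) (auto intro: rtranclp.rtrancl_into_rtrancl rstep.ctxt)

lemma rsteps_args:
  "list_all2 (rstep R)\<^sup>*\<^sup>* ts us \<Longrightarrow> (rstep R)\<^sup>*\<^sup>* (Fun f (ss @ ts)) (Fun f (ss @ us))"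
proof (induction arbitrary: ss rule: list_all2_induct)
  case Nil
  then show ?case by simp
next
  case (Cons t ts u us)
  have "(rstep R)\<^sup>*\<^sup>* (Fun f (ss @ t # ts)) (Fun f (ss @ u # ts))"
    using Cons.hyps(1) by (rule rsteps_ctxt)
  also have "(rstep R)\<^sup>*\<^sup>* (Fun f (ss @ u # ts)) (Fun f (ss @ u # us))"
    using Cons.IH[of "ss @ [u]"] by simp
  finally show ?case by simp
qed

lemma rsteps_subst:
  "(\<And>x. x \<in> vars_term t \<Longrightarrow> (rstep R)\<^sup>*\<^sup>* (\<sigma> x) (\<tau> x)) \<Longrightarrow> (rstep R)\<^sup>*\<^sup>* (t \<cdot> \<sigma>) (t \<cdot> \<tau>)"
proof (induction t)
  case (Var x)
  then show ?case by simp
next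
  case (Fun f ts)
  have "(rstep R)\<^sup>*\<^sup>* (t \<cdot> \<sigma>) (t \<cdot> \<tau>)" if "t \<in> set ts" for t
    using that Fun by auto
  then have "list_all2 (rstep R)\<^sup>*\<^sup>* (map (\<lambda>t. t \<cdot> \<sigma>) ts) (map (\<lambda>t. t \<cdot> \<tau>) ts)"
    by (simp add: list_all2_conv_all_nth)
  from rsteps_args[OF this, of f "[]"] show ?case by simp
qed

text \<open>Reduction below the variable positions of a pattern, tracked per variable occurrence:
  patterns need not be linear, so the reduct is in general no instance of the pattern.\<close>
inductive pattern_rsteps ::
  "('f, 'v) crule set \<Rightarrow> ('f, 'v) term \<Rightarrow> ('f, 'v) term \<Rightarrow> ('f, 'v) term \<Rightarrow> bool"
  for R where
  Var: "(rstep R)\<^sup>*\<^sup>* s t \<Longrightarrow> pattern_rsteps R (Var x) s t"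
| Fun: "length ss = length cs \<Longrightarrow> length ts = length cs \<Longrightarrow>
      (\<forall>i<length cs. pattern_rsteps R (cs ! i) (ss ! i) (ts ! i)) \<Longrightarrow>
      pattern_rsteps R (Fun g cs) (Fun g ss) (Fun g ts)"

lemma pattern_rsteps_refl: "pattern_rsteps R c (c \<cdot> \<sigma>) (c \<cdot> \<sigma>)"
  by (induction c) (auto intro!: pattern_rsteps.intros)

lemma pattern_rsteps_subst:
  assumes "pattern_rsteps R c (c \<cdot> \<sigma>) (c \<cdot> \<tau>)" and "x \<in> vars_term c"
  shows "(rstep R)\<^sup>*\<^sup>* (\<sigma> x) (\<tau> x)"
  using assms
proof (induction c)
  case (Var y)
  then show ?case by (auto elim: pattern_rsteps.cases)
next
  case (Fun g cs)
  then obtain i where i: "i < length cs" "x \<in> vars_term (cs ! i)"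
    by (auto simp: in_set_conv_nth)
  with Fun.prems(1) have "pattern_rsteps R (cs ! i) (cs ! i \<cdot> \<sigma>) (cs ! i \<cdot> \<tau>)"
    by (auto elim: pattern_rsteps.cases)
  with Fun.IH[of "cs ! i"] i show ?case by simp
qed

lemma pattern_rsteps_nonroot_step:
  assumes "pattern_rsteps R (Fun g cs) s t" and "nonroot_step R t t'"
    and arg_step: "\<And>c s' t0 t0'. c \<in> set cs \<Longrightarrow> pattern_rsteps R c s' t0 \<Longrightarrow> rstep R t0 t0' \<Longrightarrow>
      pattern_rsteps R c s' t0'"
  shows "pattern_rsteps R (Fun g cs) s t'"
proof -
  from assms(1) obtain ss ts where s: "s = Fun g ss" and t: "t = Fun g ts"
    and len: "length ss = length cs" "length ts = length cs"
    and args: "\<forall>i<length cs. pattern_rsteps R (cs ! i) (ss ! i) (ts ! i)"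
    by (auto elim: pattern_rsteps.cases)
  from assms(2) t obtain ts1 t0 t0' ts2 where ts: "ts = ts1 @ t0 # ts2"
    and t': "t' = Fun g (ts1 @ t0' # ts2)" and "rstep R t0 t0'"
    unfolding nonroot_step_def by auto
  define k where "k = length ts1"
  have k: "k < length cs" and "ts ! k = t0" and t'_upd: "ts1 @ t0' # ts2 = ts[k := t0']"
    using len ts by (auto simp: k_def list_update_append)
  with args \<open>rstep R t0 t0'\<close> have "pattern_rsteps R (cs ! k) (ss ! k) t0'"
    by (auto intro: arg_step)
  with args k len have "\<forall>i<length cs. pattern_rsteps R (cs ! i) (ss ! i) (ts[k := t0'] ! i)"
    by (simp add: nth_list_update)
  with len show ?thesis
    unfolding s t' t'_upd by (auto intro!: pattern_rsteps.Fun)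
qed

lemma rstep_undefined_root_nonroot_step:
  assumes "cctrs R" and "rstep R (Fun g ts) t" and "(g, length ts) \<notin> defined_syms R"
  shows "nonroot_step R (Fun g ts) t"
  using assms(2)
proof (cases rule: rstep.cases)
  case (root \<rho> \<sigma>)
  from assms(1) \<open>\<rho> \<in> R\<close> obtain f ls where "lhs \<rho> = Fun f ls"
    unfolding cctrs_def cctrs_rule_def Let_def by blast
  with root have "lhs \<rho> = Fun g ls" and "length ls = length ts"
    by auto
  with \<open>\<rho> \<in> R\<close> have "(g, length ls) \<in> defined_syms R"
    unfolding defined_syms_def by blast
  with assms(3) \<open>length ls = length ts\<close> show ?thesis by simp
next
  case ctxt
  then show ?thesis unfolding nonroot_step_def by blast
qed

lemma pattern_rsteps_constructor_rstep:
  assumes "cctrs R" and "constructor_term R c"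
    and "pattern_rsteps R c s t" and "rstep R t t'"
  shows "pattern_rsteps R c s t'"
  using assms(2-)
proof (induction c arbitrary: s t t')
  case (Var x)
  then show ?case by (auto elim!: pattern_rsteps.cases intro!: pattern_rsteps.Var)
next
  case (Fun g cs)
  from Fun.prems(2) obtain ts where t: "t = Fun g ts" and "length ts = length cs"
    by (auto elim: pattern_rsteps.cases)
  with Fun.prems(1) have "(g, length ts) \<notin> defined_syms R"
    unfolding constructor_term_def by auto
  with assms(1) Fun.prems(3) t have "nonroot_step R t t'"
    by (auto intro: rstep_undefined_root_nonroot_step)
  moreover have "constructor_term R c" if "c \<in> set cs" for c
    using Fun.prems(1) that unfolding constructor_term_def by auto
  ultimately show ?case
    using Fun.prems(2) by (auto intro: pattern_rsteps_nonroot_step Fun.IH)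
qed

lemma pattern_rsteps_lhs:
  assumes "cctrs R" and "\<rho> \<in> R" and "(nonroot_step R)\<^sup>*\<^sup>* (lhs \<rho> \<cdot> \<sigma>) t"
  shows "pattern_rsteps R (lhs \<rho>) (lhs \<rho> \<cdot> \<sigma>) t"
proof -
  from assms(1,2) obtain f ls where l: "lhs \<rho> = Fun f ls"
    and ls: "\<forall>c\<in>set ls. constructor_term R c"
    unfolding cctrs_def cctrs_rule_def Let_def by blast
  from assms(3) show ?thesis
  proof (induction rule: rtranclp_induct)
    case base
    show ?case by (rule pattern_rsteps_refl)
  next
    case (step y z)
    then show ?case
      unfolding l using ls
      by (auto intro: pattern_rsteps_nonroot_step pattern_rsteps_constructor_rstep[OF assms(1)])
  qed
qed

text \<open>The matching substitution is the reduced one outside the left-hand side, so that the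
  conditions, whose right-hand sides avoid the variables of the left-hand side, stay joinable.\<close>
lemma root_step_from_rsteps_match:
  assumes "cctrs_rule R \<rho>" and "root_step R \<rho> (lhs \<rho> \<cdot> \<tau>) u"
    and red: "\<And>x. x \<in> vars_term (lhs \<rho>) \<Longrightarrow> (rstep R)\<^sup>*\<^sup>* (\<sigma> x) (\<tau> x)"
  shows "\<exists>v. root_step R \<rho> (lhs \<rho> \<cdot> \<sigma>) v \<and> (rstep R)\<^sup>*\<^sup>* v u"
proof -
  from assms(1) have disj_nth:
      "\<forall>i < length (conds \<rho>). vars_term (lhs \<rho>) \<inter> vars_term (snd (conds \<rho> ! i)) = {}"
    unfolding cctrs_rule_def Let_def by blast
  have disj: "vars_term (lhs \<rho>) \<inter> vars_term b = {}" if "(a, b) \<in> set (conds \<rho>)" for a b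
    using that disj_nth by (metis in_set_conv_nth snd_conv)
  from assms(2) obtain \<mu> where "\<rho> \<in> R" and match: "lhs \<rho> \<cdot> \<tau> = lhs \<rho> \<cdot> \<mu>"
    and u: "u = rhs \<rho> \<cdot> \<mu>"
    and cond: "\<forall>(a, b) \<in> set (conds \<rho>). (rstep R)\<^sup>*\<^sup>* (a \<cdot> \<mu>) (b \<cdot> \<mu>)"
    unfolding root_step_def by blast
  define \<sigma>' where "\<sigma>' x = (if x \<in> vars_term (lhs \<rho>) then \<sigma> x else \<mu> x)" for x
  have "lhs \<rho> \<cdot> \<sigma>' = lhs \<rho> \<cdot> \<sigma>"
    by (simp add: subst_eq_conv \<sigma>'_def)
  have \<sigma>'_\<mu>: "(rstep R)\<^sup>*\<^sup>* (\<sigma>' x) (\<mu> x)" for x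
    using red match by (auto simp: \<sigma>'_def subst_eq_conv)
  have "(rstep R)\<^sup>*\<^sup>* (a \<cdot> \<sigma>') (b \<cdot> \<sigma>')" if ab: "(a, b) \<in> set (conds \<rho>)" for a b
  proof -
    have "(rstep R)\<^sup>*\<^sup>* (a \<cdot> \<sigma>') (a \<cdot> \<mu>)"
      using \<sigma>'_\<mu> by (rule rsteps_subst)
    also have "(rstep R)\<^sup>*\<^sup>* (a \<cdot> \<mu>) (b \<cdot> \<mu>)"
      using cond ab by auto
    also have "b \<cdot> \<mu> = b \<cdot> \<sigma>'"
      using disj[OF ab] by (auto simp: subst_eq_conv \<sigma>'_def)
    finally show ?thesis .
  qed
  with \<open>\<rho> \<in> R\<close> \<open>lhs \<rho> \<cdot> \<sigma>' = lhs \<rho> \<cdot> \<sigma>\<close>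
  have "root_step R \<rho> (lhs \<rho> \<cdot> \<sigma>) (rhs \<rho> \<cdot> \<sigma>')"
    unfolding root_step_def by (auto intro!: exI[of _ \<sigma>'])
  moreover have "(rstep R)\<^sup>*\<^sup>* (rhs \<rho> \<cdot> \<sigma>') u"
    unfolding u using \<sigma>'_\<mu> by (rule rsteps_subst)
  ultimately show ?thesis by blast
qed

theorem lemma3p1:
  fixes R :: "('f, 'v) crule set" and \<rho> :: "('f, 'v) crule"
    and s t u :: "('f, 'v) term" and \<sigma> :: "'v \<Rightarrow> ('f, 'v) term"
  assumes "cctrs R"
    and "\<rho> \<in> R"
    and "s = lhs \<rho> \<cdot> \<sigma>"
    and "(nonroot_step R)\<^sup>*\<^sup>* s t"
    and "root_step R \<rho> t u"
  shows "\<exists>v. root_step R \<rho> s v \<and> (rstep R)\<^sup>*\<^sup>* v u"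
proof -
  from assms(5) obtain \<tau> where t: "t = lhs \<rho> \<cdot> \<tau>"
    unfolding root_step_def by blast
  from assms(1-4) have "pattern_rsteps R (lhs \<rho>) (lhs \<rho> \<cdot> \<sigma>) (lhs \<rho> \<cdot> \<tau>)"
    unfolding t by (auto intro: pattern_rsteps_lhs)
  then have "(rstep R)\<^sup>*\<^sup>* (\<sigma> x) (\<tau> x)" if "x \<in> vars_term (lhs \<rho>)" for x
    using that by (rule pattern_rsteps_subst)
  moreover have "cctrs_rule R \<rho>"
    using assms(1,2) unfolding cctrs_def by blast
  ultimately show ?thesis
    using assms(3,5) t by (auto intro: root_step_from_rsteps_match)
qed

end
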